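(* Let $E=k[[x_1,x_2]]((\partial_1^{-1}))((\partial_2^{-1}))$ act on the right on $V=k((z_1))((z_2))$ as in the context, and let $W_l\subset V$ be the closed subspace topologically generated by the monomials $z_1^nz_2^m$ with $n\le0$, $m\in\mathbb Z$ (so $W_l=k[z_1^{-1}]((z_2))$). Put $E_+^l=\{A\in E: W_lA\subseteq W_l\}$ and $E_-^l=k[[x_1,x_2]]\partial_1^{-1}[[\partial_1^{-1}]]((\partial_2^{-1}))$. Then $E_+^l$ is an associative ring with unity, $E_+^l=k[[x_1,x_2]][\partial_1]((\partial_2^{-1}))$, and $E=E_+^l\oplus E_-^l$ as abelian groups.
   Context: $k$ is a field of characteristic zero, $\partial_i=\partial/\partial x_i$. $E$ is the ring of formal pseudo-differential operators: iterated formal Laurent series in $\partial_1^{-1}$ and then $\partial_2^{-1}$ with coefficients in $k[[x_1,x_2]]$ written on the left, multiplied by the Leibniz rule $\partial_i^{n}a=\sum_{j\ge0}\binom{n}{j}\partial_i^j(a)\partial_i^{n-j}$ for all $n\in\mathbb Z$, $\binom{n}{j}=n(n-1)\cdots(n-j+1)/j!$. The right action of $E$ on $V$ is via $E/(x_1E+x_2E)\simeq V$, the class of $p\,\partial_1^i\partial_2^j$ ($p\in k[[x_1,x_2]]$) corresponding to $p(0,0)z_1^{-i}z_2^{-j}$. $V$ carries the standard two-dimensional local field topology (base of neighbourhoods of zero: $\{\sum a_iz_2^i: a_i\in U_i\}$ for neighbourhoods $U_i$ of $0$ in $k((z_1))$, $U_i=k((z_1))$ for $i\gg0$, where $k$ is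 discrete). *)

theory Defs
  imports "HOL-Computational_Algebra.Formal_Power_Series" "HOL-Algebra.Ring"
begin

text \<open>k[[x1,x2]] is rendered as 'a fps fps (outer variable x2, inner variable x1).\<close>

definition pd1 :: "'a::comm_ring_1 fps fps \<Rightarrow> 'a fps fps" where
  "pd1 f = Abs_fps (\<lambda>n. fps_deriv (fps_nth f n))"

definition pd2 :: "'a::comm_ring_1 fps fps \<Rightarrow> 'a fps fps" where
  "pd2 f = fps_deriv f"

definition pval0 :: "'a::comm_ring_1 fps fps \<Rightarrow> 'a" where
  "pval0 f = fps_nth (fps_nth f 0) 0"

text \<open>An element of E is represented by its coefficient function:
  A i j is the coefficient (written on the left) of d1^i d2^j.\<close>
type_synonym 'a psido = "int \<Rightarrow> int \<Rightarrow> 'a fps fps"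

definition PsiDO :: "'a::comm_ring_1 psido set" where
  "PsiDO = {A. (\<exists>N. \<forall>i j. j > N \<longrightarrow> A i j = 0) \<and>
               (\<forall>j. \<exists>M. \<forall>i. i > M \<longrightarrow> A i j = 0)}"

definition ezero :: "'a::comm_ring_1 psido" where
  "ezero = (\<lambda>i j. 0)"

definition eone :: "'a::comm_ring_1 psido" where
  "eone = (\<lambda>i j. if i = 0 \<and> j = 0 then 1 else 0)"

definition eadd :: "'a::comm_ring_1 psido \<Rightarrow> 'a psido \<Rightarrow> 'a psido" where
  "eadd A B = (\<lambda>i j. A i j + B i j)"

text \<open>Multiplication by the Leibniz rule:
  (a d1^i d2^j)(b d1^p d2^q) = sum_{s,t} a (i gchoose s)(j gchoose t) d1^s d2^t(b) d1^(i+p-s) d2^(j+q-t).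
  For elements of PsiDO the index set below is finite.\<close>
definition emul_idx :: "'a::comm_ring_1 psido \<Rightarrow> 'a psido \<Rightarrow> int \<Rightarrow> int \<Rightarrow> (int \<times> int \<times> nat \<times> nat) set" where
  "emul_idx A B u v = {x. A (fst x) (fst (snd x)) \<noteq> 0 \<and>
       B (u - fst x + int (fst (snd (snd x)))) (v - fst (snd x) + int (snd (snd (snd x)))) \<noteq> 0}"

definition emul :: "'a::field_char_0 psido \<Rightarrow> 'a psido \<Rightarrow> 'a psido" where
  "emul A B = (\<lambda>u v.
     \<Sum>(i, j, s, t) \<in> emul_idx A B u v.
        A i j * fps_const (fps_const ((of_int i gchoose s) * (of_int j gchoose t)))
              * (pd1 ^^ s) ((pd2 ^^ t) (B (u - i + int s) (v - j + int t))))"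

text \<open>V = k((z1))((z2)); v n m is the coefficient of z1^n z2^m.\<close>
definition Vsp :: "(int \<Rightarrow> int \<Rightarrow> 'a::zero) set" where
  "Vsp = {v. (\<exists>M. \<forall>n m. m < M \<longrightarrow> v n m = 0) \<and>
             (\<forall>m. \<exists>N. \<forall>n. n < N \<longrightarrow> v n m = 0)}"

text \<open>The isomorphism E/(x1 E + x2 E) = V: class of p d1^i d2^j goes to p(0,0) z1^-i z2^-j.
  lift chooses the representative with constant coefficients.\<close>
definition proj :: "'a::comm_ring_1 psido \<Rightarrow> (int \<Rightarrow> int \<Rightarrow> 'a)" where
  "proj A = (\<lambda>n m. pval0 (A (- n) (- m)))"

definition lift :: "(int \<Rightarrow> int \<Rightarrow> 'a::comm_ring_1) \<Rightarrow> 'a psido" where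
  "lift v = (\<lambda>i j. fps_const (fps_const (v (- i) (- j))))"

definition ract :: "(int \<Rightarrow> int \<Rightarrow> 'a::field_char_0) \<Rightarrow> 'a psido \<Rightarrow> (int \<Rightarrow> int \<Rightarrow> 'a)" where
  "ract v A = proj (emul (lift v) A)"

definition Wl :: "(int \<Rightarrow> int \<Rightarrow> 'a::zero) set" where
  "Wl = {v \<in> Vsp. \<forall>n m. n > 0 \<longrightarrow> v n m = 0}"

definition Eplus :: "'a::field_char_0 psido set" where
  "Eplus = {A \<in> PsiDO. \<forall>v \<in> Wl. ract v A \<in> Wl}"

definition Epoly :: "'a::comm_ring_1 psido set" where
  "Epoly = {A \<in> PsiDO. \<forall>i j. i < 0 \<longrightarrow> A i j = 0}"

definition Eminus :: "'a::comm_ring_1 psido set" where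
  "Eminus = {A \<in> PsiDO. \<forall>i j. i \<ge> 0 \<longrightarrow> A i j = 0}"

definition Eplus_ring :: "'a::field_char_0 psido ring" where
  "Eplus_ring = \<lparr>carrier = Eplus, monoid.mult = emul, one = eone, zero = ezero, add = eadd\<rparr>"

definition E_addgroup :: "'a::field_char_0 psido monoid" where
  "E_addgroup = \<lparr>carrier = PsiDO, monoid.mult = eadd, one = ezero\<rparr>"

end

theory Submission
  imports Defs "HOL-Library.Groups_Big_Fun"
begin

(* The proof has four parts.
   (1) The coefficient operators pd1, pd2 are commuting k-linear derivations, so the mixed
       derivative pdiff s t = pd1^s pd2^t satisfies a two-variable Leibniz rule.
   (2) Bounds on supports show that each coefficient of a product (even of a triple product) is a
       finite sum.  Hence PsiDO is closed under emul, and emul is distributive, unital and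
       associative: both (AB)C and A(BC) expand into the same ten-fold finite sum, using the
       Leibniz rule and Vandermonde's identity for generalised binomial coefficients.
   (3) E_+ = k[[x1,x2]][d1]((d2^-1)): an operator without negative powers of d1 preserves W_l
       because (i gchoose s) = 0 for 0 <= i < s; conversely, applying an operator of E_+ to the
       monomials z1^-a z2^-b and inducting on a + b forces every coefficient with i < 0 to vanish.
   (4) Sets of operators whose coefficients vanish on a set of d1-exponents are additive subgroups,
       two complementary such sets give a direct sum decomposition of E, and such a set closed
       under emul and containing 1 is a ring. *)

notation fps_nth (infixl \<open>$\<close> 75)

section \<open>Constants and derivations of k[[x1,x2]]\<close>

definition kconst :: "'a::comm_ring_1 \<Rightarrow> 'a fps fps" where
  "kconst c = fps_const (fps_const c)"

lemma kconst_mult: "kconst (a * b) = kconst a * kconst b"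
  by (simp add: kconst_def fps_const_mult)

lemma kconst_add: "kconst (a + b) = kconst a + kconst b"
  by (simp add: kconst_def fps_const_add)

lemma kconst_1 [simp]: "kconst 1 = 1"
  by (simp add: kconst_def)

lemma kconst_0 [simp]: "kconst 0 = 0"
  by (simp add: kconst_def)

lemma kconst_sum: "kconst (sum f S) = (\<Sum>x\<in>S. kconst (f x))"
  by (induction S rule: infinite_finite_induct) (auto simp: kconst_add)

definition k_derivation :: "('a::comm_ring_1 fps fps \<Rightarrow> 'a fps fps) \<Rightarrow> bool" where
  "k_derivation d \<longleftrightarrow> (\<forall>f g. d (f + g) = d f + d g) \<and> (\<forall>f g. d (f * g) = d f * g + f * d g)
     \<and> (\<forall>c f. d (kconst c * f) = kconst c * d f)"

lemma derivation_add: "k_derivation d \<Longrightarrow> d (f + g) = d f + d g"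
  unfolding k_derivation_def by blast

lemma derivation_mult: "k_derivation d \<Longrightarrow> d (f * g) = d f * g + f * d g"
  unfolding k_derivation_def by blast

lemma derivation_kconst: "k_derivation d \<Longrightarrow> d (kconst c * f) = kconst c * d f"
  unfolding k_derivation_def by blast

lemma derivation_0: "k_derivation d \<Longrightarrow> d 0 = 0"
  using derivation_add[of d 0 0] by simp

lemma derivation_funpow_add: "k_derivation d \<Longrightarrow> (d ^^ n) (f + g) = (d ^^ n) f + (d ^^ n) g"
  by (induction n) (auto simp: derivation_add)

lemma derivation_funpow_0: "k_derivation d \<Longrightarrow> (d ^^ n) 0 = 0"
  by (induction n) (auto simp: derivation_0)

lemma derivation_funpow_kconst: "k_derivation d \<Longrightarrow> (d ^^ n) (kconst c * f) = kconst c * (d ^^ n) f"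
  by (induction n) (auto simp: derivation_kconst)

lemma derivation_funpow_sum: "k_derivation d \<Longrightarrow> (d ^^ n) (sum f S) = (\<Sum>x\<in>S. (d ^^ n) (f x))"
  by (induction S rule: infinite_finite_induct) (auto simp: derivation_funpow_add derivation_funpow_0)

lemma derivation_leibniz:
  assumes "k_derivation d"
  shows "(d ^^ n) (f * g) = (\<Sum>k\<le>n. kconst (of_nat (n choose k)) * ((d ^^ k) f * (d ^^ (n - k)) g))"
proof (induction n)
  case 0 then show ?case by simp
next
  case (Suc n)
  have "(d ^^ Suc n) (f * g) = d (\<Sum>k\<le>n. kconst (of_nat (n choose k)) * ((d ^^ k) f * (d ^^ (n - k)) g))"
    using Suc by simp
  also have "\<dots> = (\<Sum>k\<le>n. kconst (of_nat (n choose k)) * ((d ^^ Suc k) f * (d ^^ (n - k)) g))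
      + (\<Sum>k\<le>n. kconst (of_nat (n choose k)) * ((d ^^ k) f * (d ^^ Suc (n - k)) g))"
  proof -
    have "d (\<Sum>k\<le>n. kconst (of_nat (n choose k)) * ((d ^^ k) f * (d ^^ (n - k)) g))
       = (\<Sum>k\<le>n. d (kconst (of_nat (n choose k)) * ((d ^^ k) f * (d ^^ (n - k)) g)))"
      using derivation_funpow_sum[OF assms, of 1] by simp
    then show ?thesis using assms
      by (simp add: derivation_kconst derivation_mult distrib_left sum.distrib)
  qed
  also have "\<dots> = (\<Sum>k\<le>Suc n. kconst (of_nat (Suc n choose k)) * ((d ^^ k) f * (d ^^ (Suc n - k)) g))"
  proof -
    have shifted: "(\<Sum>k\<le>n. kconst (of_nat (n choose k)) * ((d ^^ Suc k) f * (d ^^ (n - k)) g))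
        = (\<Sum>k\<le>Suc n. kconst (of_nat (if k = 0 then 0 else n choose (k - 1))) * ((d ^^ k) f * (d ^^ (Suc n - k)) g))"
      by (simp add: sum.atMost_Suc_shift binomial_eq_0 del: sum.atMost_Suc)
    have extended: "(\<Sum>k\<le>n. kconst (of_nat (n choose k)) * ((d ^^ k) f * (d ^^ Suc (n - k)) g))
        = (\<Sum>k\<le>Suc n. kconst (of_nat (n choose k)) * ((d ^^ k) f * (d ^^ (Suc n - k)) g))"
      by (simp add: Suc_diff_le binomial_eq_0)
    have pascal: "kconst (of_nat (if k = 0 then 0 else n choose (k - 1))) + kconst (of_nat (n choose k))
        = (kconst (of_nat (Suc n choose k)) :: 'a fps fps)" for k
      by (cases k) (simp_all only: kconst_add[symmetric], simp_all)
    show ?thesis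
      by (simp only: shifted extended sum.distrib[symmetric] distrib_right[symmetric] pascal)
  qed
  finally show ?case .
qed

lemma pd1_nth [simp]: "pd1 f $ n = fps_deriv (f $ n)"
  by (simp add: pd1_def)

lemma derivation_pd1: "k_derivation (pd1 :: 'a::comm_ring_1 fps fps \<Rightarrow> _)"
  unfolding k_derivation_def
proof (intro conjI allI)
  fix f g :: "'a fps fps" and c :: 'a
  show "pd1 (f + g) = pd1 f + pd1 g" by (rule fps_ext) simp
  show "pd1 (f * g) = pd1 f * g + f * pd1 g"
    by (rule fps_ext) (simp add: fps_mult_nth fps_deriv_sum sum.distrib)
  show "pd1 (kconst c * f) = kconst c * pd1 f"
    by (rule fps_ext) (simp add: kconst_def)
qed

lemma derivation_pd2: "k_derivation (pd2 :: 'a::comm_ring_1 fps fps \<Rightarrow> _)"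
  unfolding k_derivation_def pd2_def by (simp add: kconst_def)

lemma pd1_pd2_commute: "pd1 (pd2 f) = pd2 (pd1 f)"
  unfolding pd2_def
  by (rule fps_ext) (simp add: fps_deriv_nth fps_of_nat[symmetric] del: fps_of_nat)

lemma pd1_pd2_funpow_commute: "(pd2 ^^ b) ((pd1 ^^ a) f) = (pd1 ^^ a) ((pd2 ^^ b) f)"
proof -
  have "pd2 ((pd1 ^^ a) f) = (pd1 ^^ a) (pd2 f)" for f :: "'a fps fps"
    by (induction a) (simp_all add: pd1_pd2_commute[symmetric])
  then show ?thesis by (induction b) auto
qed

definition pdiff :: "nat \<Rightarrow> nat \<Rightarrow> 'a::comm_ring_1 fps fps \<Rightarrow> 'a fps fps" where
  "pdiff s t f = (pd1 ^^ s) ((pd2 ^^ t) f)"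

lemma pdiff_pdiff: "pdiff a b (pdiff c e f) = pdiff (a + c) (b + e) f"
  unfolding pdiff_def by (simp add: pd1_pd2_funpow_commute funpow_add)

lemma pdiff_00 [simp]: "pdiff 0 0 f = f"
  by (simp add: pdiff_def)

lemma pdiff_add: "pdiff s t (f + g) = pdiff s t f + pdiff s t g"
  by (simp add: pdiff_def derivation_funpow_add derivation_pd1 derivation_pd2)

lemma pdiff_0 [simp]: "pdiff s t 0 = 0"
  by (simp add: pdiff_def derivation_funpow_0 derivation_pd1 derivation_pd2)

lemma pdiff_kconst: "pdiff s t (kconst c * f) = kconst c * pdiff s t f"
  by (simp add: pdiff_def derivation_funpow_kconst derivation_pd1 derivation_pd2)

lemma pdiff_sum: "pdiff s t (sum f S) = (\<Sum>x\<in>S. pdiff s t (f x))"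
  by (simp add: pdiff_def derivation_funpow_sum derivation_pd1 derivation_pd2)

lemma pdiff_1: "pdiff s t 1 = (if s = 0 \<and> t = 0 then 1 else 0)"
proof -
  have pd1_one: "pd1 1 = 0" by (rule fps_ext) (simp add: fps_one_nth)
  have pd1: "(pd1 ^^ s) 1 = (if s = 0 then 1 else 0)"
    by (cases s) (simp_all add: pd1_one funpow_Suc_right derivation_funpow_0[OF derivation_pd1] del: funpow.simps)
  have pd2: "(pd2 ^^ t) 1 = (if t = 0 then 1 else 0)"
    by (cases t) (simp_all add: funpow_Suc_right derivation_funpow_0[OF derivation_pd2] pd2_def del: funpow.simps)
  show ?thesis unfolding pdiff_def pd2 by (simp add: pd1 derivation_funpow_0[OF derivation_pd1])
qed

lemma pdiff_leibniz:
  "pdiff s t (f * g) = (\<Sum>\<sigma>\<le>s. \<Sum>\<tau>\<le>t. kconst (of_nat (s choose \<sigma>) * of_nat (t choose \<tau>)) *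
      (pdiff \<sigma> \<tau> f * pdiff (s - \<sigma>) (t - \<tau>) g))"
proof -
  have "pdiff s t (f * g) = (pd1 ^^ s) (\<Sum>\<tau>\<le>t. kconst (of_nat (t choose \<tau>)) * ((pd2 ^^ \<tau>) f * (pd2 ^^ (t - \<tau>)) g))"
    unfolding pdiff_def by (simp add: derivation_leibniz[OF derivation_pd2])
  also have "\<dots> = (\<Sum>\<tau>\<le>t. kconst (of_nat (t choose \<tau>)) * (\<Sum>\<sigma>\<le>s. kconst (of_nat (s choose \<sigma>)) *
       (pdiff \<sigma> \<tau> f * pdiff (s - \<sigma>) (t - \<tau>) g)))"
    unfolding derivation_funpow_sum[OF derivation_pd1]
    by (rule sum.cong[OF refl], subst derivation_funpow_kconst[OF derivation_pd1],
        simp only: derivation_leibniz[OF derivation_pd1] pdiff_def)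
  also have "\<dots> = (\<Sum>\<tau>\<le>t. \<Sum>\<sigma>\<le>s. kconst (of_nat (s choose \<sigma>) * of_nat (t choose \<tau>)) *
      (pdiff \<sigma> \<tau> f * pdiff (s - \<sigma>) (t - \<tau>) g))"
    by (simp add: sum_distrib_left kconst_mult mult_ac)
  finally show ?thesis by (simp add: sum.swap[of _ "{..s}"])
qed

lemma fps_deriv_funpow_nth:
  "of_nat (fact n) * ((fps_deriv ^^ t) (f :: 'b::comm_ring_1 fps)) $ n = of_nat (fact (n + t)) * f $ (n + t)"
proof (induction t arbitrary: n f)
  case 0 then show ?case by simp
next
  case (Suc t)
  have "of_nat (fact n) * ((fps_deriv ^^ Suc t) f) $ n = of_nat (fact n) * ((fps_deriv ^^ t) (fps_deriv f)) $ n"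
    by (simp add: funpow_Suc_right del: funpow.simps)
  also have "\<dots> = of_nat (fact (n + t)) * (of_nat (n + t + 1) * f $ (n + t + 1))"
    using Suc by simp
  also have "\<dots> = of_nat (fact (n + Suc t)) * f $ (n + Suc t)"
    by (simp add: algebra_simps)
  finally show ?case .
qed

lemma fps_deriv_funpow_nth0: "((fps_deriv ^^ t) (f :: 'b::comm_ring_1 fps)) $ 0 = of_nat (fact t) * f $ t"
  using fps_deriv_funpow_nth[of 0 t f] by simp

lemma pval0_pdiff: "pval0 (pdiff s t f) = of_nat (fact s) * of_nat (fact t) * (f $ t) $ s"
proof -
  have pd1_nth_funpow: "((pd1 ^^ s) h) $ n = (fps_deriv ^^ s) (h $ n)" for h :: "'a fps fps" and n
    by (induction s) auto
  have "pd2 = (fps_deriv :: 'a fps fps \<Rightarrow> _)" by (rule ext) (simp add: pd2_def)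
  then have "pval0 (pdiff s t f) = ((fps_deriv ^^ s) (((fps_deriv ^^ t) f) $ 0)) $ 0"
    by (simp add: pval0_def pdiff_def pd1_nth_funpow)
  also have "\<dots> = of_nat (fact s) * (of_nat (fact t) * f $ t) $ s"
    by (simp add: fps_deriv_funpow_nth0)
  also have "\<dots> = of_nat (fact s) * of_nat (fact t) * (f $ t) $ s"
    by (simp add: fps_of_nat[symmetric] del: fps_of_nat)
  finally show ?thesis .
qed

lemma pval0_add: "pval0 (f + g) = pval0 f + pval0 g"
  by (simp add: pval0_def)

lemma pval0_sum: "pval0 (sum f S) = (\<Sum>x\<in>S. pval0 (f x))"
  by (induction S rule: infinite_finite_induct) (auto simp: pval0_add pval0_def)

lemma pval0_kconst: "pval0 (kconst c * f) = c * pval0 f"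
  by (simp add: pval0_def kconst_def)

text \<open>(i gchoose s) vanishes for integers 0 \<le> i < s; this is why d1^i with i \<ge> 0
  cannot produce negative powers of d1.\<close>
lemma gchoose_int_zero:
  assumes "0 \<le> i" "i < int s"
  shows "(of_int i gchoose s :: 'a::field_char_0) = 0"
proof -
  obtain n where n: "i = int n" using assms(1) nonneg_int_cases by blast
  have "(of_int i gchoose s :: 'a) = of_nat (n choose s)" unfolding n by (simp add: binomial_gbinomial)
  then show ?thesis using assms n by (simp add: binomial_eq_0)
qed

text \<open>Vandermonde's identity in the form needed to compare the two expansions of a triple product.\<close>
lemma gchoose_product_vandermonde:
  "(of_int i gchoose s :: 'a::field_char_0) * (of_int i' gchoose s') =
   (\<Sum>l\<le>s'. (of_int i gchoose (s + l)) * of_nat ((s + l) choose s) * (of_int (i' - i + int s) gchoose (s' - l)))"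
proof -
  have trinomial: "(of_int i gchoose (s + l) :: 'a) * of_nat ((s + l) choose s)
      = (of_int i gchoose s) * ((of_int i - of_nat s) gchoose l)" for l
    using gbinomial_trinomial_revision[of s "s + l" "of_int i :: 'a"] by (simp add: binomial_gbinomial)
  have "(\<Sum>l\<le>s'. (of_int i gchoose (s + l)) * of_nat ((s + l) choose s) * (of_int (i' - i + int s) gchoose (s' - l)))
      = (of_int i gchoose s :: 'a) * (\<Sum>l\<in>{0..s'}. ((of_int i - of_nat s) gchoose l) * (of_int (i' - i + int s) gchoose (s' - l)))"
    by (simp add: trinomial sum_distrib_left mult.assoc atMost_atLeast0)
  also have "\<dots> = (of_int i gchoose s) * ((of_int i - of_nat s + of_int (i' - i + int s)) gchoose s')"
    by (simp add: gbinomial_Vandermonde)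
  finally show ?thesis by simp
qed

section \<open>Supports of operators\<close>

lemma psido_row_bound: "A \<in> PsiDO \<Longrightarrow> \<exists>N. \<forall>i j. j > N \<longrightarrow> A i j = 0"
  by (auto simp: PsiDO_def)

lemma psido_col_bound:
  assumes "A \<in> PsiDO"
  shows "\<exists>M. \<forall>i j. j \<ge> L \<longrightarrow> i > M \<longrightarrow> A i j = 0"
proof -
  obtain N where N: "\<forall>i j. j > N \<longrightarrow> A i j = 0" using psido_row_bound[OF assms] by blast
  have "\<forall>j. \<exists>M. \<forall>i. i > M \<longrightarrow> A i j = 0" using assms by (auto simp: PsiDO_def)
  then obtain Mf where Mf: "\<And>i j. i > Mf j \<Longrightarrow> A i j = 0" by metis
  define M where "M = (\<Sum>j\<in>{L..N}. \<bar>Mf j\<bar>)"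
  have "A i j = 0" if "j \<ge> L" "i > M" for i j
  proof (cases "j > N")
    case True then show ?thesis using N by blast
  next
    case False
    then have "\<bar>Mf j\<bar> \<le> M" unfolding M_def using that by (intro member_le_sum) auto
    then show ?thesis using that Mf by (meson abs_ge_self le_less_trans order.strict_trans2)
  qed
  then show ?thesis by blast
qed

lemma int_list_bound: "\<exists>R::int. \<forall>x \<in> set xs. -R \<le> x \<and> x \<le> R"
proof (induction xs)
  case (Cons a xs)
  then obtain R where "\<forall>x \<in> set xs. -R \<le> x \<and> x \<le> R" by blast
  then show ?case by (intro exI[of _ "max \<bar>a\<bar> R"]) auto
qed simp

text \<open>The central finiteness statement: for fixed (u, v), only finitely many index tuples
  contribute to the (u, v)-coefficient of a triple product A B C.\<close>
lemma triple_support_bound: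
  assumes "A \<in> PsiDO" "B \<in> PsiDO" "C \<in> PsiDO"
  shows "\<exists>R. \<forall>i j p q n1 n2. 0 \<le> n1 \<longrightarrow> 0 \<le> n2 \<longrightarrow> A i j \<noteq> 0 \<longrightarrow> B p q \<noteq> 0 \<longrightarrow>
     C (u - i - p + n1) (v - j - q + n2) \<noteq> 0
     \<longrightarrow> \<bar>i\<bar> \<le> R \<and> \<bar>j\<bar> \<le> R \<and> \<bar>p\<bar> \<le> R \<and> \<bar>q\<bar> \<le> R \<and> n1 \<le> R \<and> n2 \<le> R"
proof -
  obtain NA where NA: "\<forall>i j. j > NA \<longrightarrow> A i j = 0" using psido_row_bound[OF assms(1)] by blast
  obtain NB where NB: "\<forall>i j. j > NB \<longrightarrow> B i j = 0" using psido_row_bound[OF assms(2)] by blast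
  obtain NC where NC: "\<forall>i j. j > NC \<longrightarrow> C i j = 0" using psido_row_bound[OF assms(3)] by blast
  obtain MA where MA: "\<forall>i j. j \<ge> v - NB - NC \<longrightarrow> i > MA \<longrightarrow> A i j = 0" using psido_col_bound[OF assms(1)] by blast
  obtain MB where MB: "\<forall>i j. j \<ge> v - NA - NC \<longrightarrow> i > MB \<longrightarrow> B i j = 0" using psido_col_bound[OF assms(2)] by blast
  obtain MC where MC: "\<forall>i j. j \<ge> v - NA - NB \<longrightarrow> i > MC \<longrightarrow> C i j = 0" using psido_col_bound[OF assms(3)] by blast
  obtain R where "\<forall>x \<in> set [NA, NB, NC, MA, MB, MC, u, v]. -R \<le> x \<and> x \<le> R"
    using int_list_bound by blast
  then have R: "-R \<le> NA" "NA \<le> R" "-R \<le> NB" "NB \<le> R" "-R \<le> NC" "NC \<le> R" "-R \<le> MA" "MA \<le> R"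
      "-R \<le> MB" "MB \<le> R" "-R \<le> MC" "MC \<le> R" "-R \<le> u" "u \<le> R" "-R \<le> v" "v \<le> R"
    by simp_all
  show ?thesis
  proof (intro exI allI impI)
    fix i j p q n1 n2 :: int
    assume h: "0 \<le> n1" "0 \<le> n2" "A i j \<noteq> 0" "B p q \<noteq> 0" "C (u - i - p + n1) (v - j - q + n2) \<noteq> 0"
    have j: "j \<le> NA" and q: "q \<le> NB" and c: "v - j - q + n2 \<le> NC"
      using NA NB NC h by (meson not_le)+
    have i: "i \<le> MA" using MA[rule_format, of j i] h(2,3) q c by linarith
    have p: "p \<le> MB" using MB[rule_format, of q p] h(2,4) j c by linarith
    have "u - i - p + n1 \<le> MC"
      using MC[rule_format, of "v - j - q + n2" "u - i - p + n1"] h(2,5) j q by linarith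
    then have "-(4 * R) \<le> i \<and> i \<le> 4 * R \<and> -(4 * R) \<le> j \<and> j \<le> 4 * R \<and> -(4 * R) \<le> p \<and> p \<le> 4 * R
        \<and> -(4 * R) \<le> q \<and> q \<le> 4 * R \<and> n1 \<le> 4 * R \<and> n2 \<le> 4 * R"
      using i j p q c h(1,2) R by linarith
    then show "\<bar>i\<bar> \<le> 4 * R \<and> \<bar>j\<bar> \<le> 4 * R \<and> \<bar>p\<bar> \<le> 4 * R \<and> \<bar>q\<bar> \<le> 4 * R \<and> n1 \<le> 4 * R \<and> n2 \<le> 4 * R"
      by (simp add: abs_le_iff)
  qed
qed

lemma psido_zero: "ezero \<in> PsiDO"
  by (simp add: PsiDO_def ezero_def)

lemma psido_one: "eone \<in> PsiDO"
proof -
  have "\<forall>i j. j > 0 \<longrightarrow> eone i j = 0" "\<forall>j. \<forall>i. i > 0 \<longrightarrow> eone i j = 0" by (auto simp: eone_def)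
  then show ?thesis unfolding PsiDO_def by blast
qed

text \<open>The two-factor case is the triple case with the identity operator as first factor.\<close>
lemma pair_support_bound:
  assumes "A \<in> PsiDO" "B \<in> PsiDO"
  shows "\<exists>R. \<forall>i j n1 n2. 0 \<le> n1 \<longrightarrow> 0 \<le> n2 \<longrightarrow> A i j \<noteq> 0 \<longrightarrow> B (u - i + n1) (v - j + n2) \<noteq> 0
     \<longrightarrow> \<bar>i\<bar> \<le> R \<and> \<bar>j\<bar> \<le> R \<and> n1 \<le> R \<and> n2 \<le> R"
proof -
  obtain R where R: "\<forall>i j p q n1 n2. 0 \<le> n1 \<longrightarrow> 0 \<le> n2 \<longrightarrow> eone i j \<noteq> 0 \<longrightarrow> A p q \<noteq> 0 \<longrightarrow>
     B (u - i - p + n1) (v - j - q + n2) \<noteq> 0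
     \<longrightarrow> \<bar>i\<bar> \<le> R \<and> \<bar>j\<bar> \<le> R \<and> \<bar>p\<bar> \<le> R \<and> \<bar>q\<bar> \<le> R \<and> n1 \<le> R \<and> n2 \<le> R"
    using triple_support_bound[OF psido_one assms] by blast
  show ?thesis
  proof (intro exI allI impI)
    fix i j n1 n2 :: int
    assume "0 \<le> n1" "0 \<le> n2" "A i j \<noteq> 0" "B (u - i + n1) (v - j + n2) \<noteq> 0"
    then show "\<bar>i\<bar> \<le> R \<and> \<bar>j\<bar> \<le> R \<and> n1 \<le> R \<and> n2 \<le> R"
      using R[rule_format, of n1 n2 0 0 i j] by (simp add: eone_def)
  qed
qed

section \<open>Products as finite sums\<close>

definition emul_term :: "'a::field_char_0 psido \<Rightarrow> 'a psido \<Rightarrow> int \<Rightarrow> int \<Rightarrow> int \<times> int \<times> nat \<times> nat \<Rightarrow> 'a fps fps" where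
  "emul_term A B u v = (\<lambda>(i, j, s, t). A i j * kconst ((of_int i gchoose s) * (of_int j gchoose t))
              * pdiff s t (B (u - i + int s) (v - j + int t)))"

lemma emul_term_simp:
  "emul_term A B u v (i, j, s, t) = A i j * kconst ((of_int i gchoose s) * (of_int j gchoose t))
      * pdiff s t (B (u - i + int s) (v - j + int t))"
  by (simp add: emul_term_def)

lemma emul_as_sum: "emul A B u v = sum (emul_term A B u v) (emul_idx A B u v)"
  unfolding emul_def emul_term_def kconst_def pdiff_def by simp

lemma emul_idx_finite:
  assumes "A \<in> PsiDO" "B \<in> PsiDO"
  shows "finite (emul_idx A B u v)"
proof -
  obtain R where R: "\<forall>i j n1 n2. 0 \<le> n1 \<longrightarrow> 0 \<le> n2 \<longrightarrow> A i j \<noteq> 0 \<longrightarrow> B (u - i + n1) (v - j + n2) \<noteq> 0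
     \<longrightarrow> \<bar>i\<bar> \<le> R \<and> \<bar>j\<bar> \<le> R \<and> n1 \<le> R \<and> n2 \<le> R" using pair_support_bound[OF assms] by blast
  have "emul_idx A B u v \<subseteq> {-R..R} \<times> {-R..R} \<times> {..nat R} \<times> {..nat R}"
  proof
    fix x assume "x \<in> emul_idx A B u v"
    then obtain i j s t where x: "x = (i, j, s, t)" "A i j \<noteq> 0" "B (u - i + int s) (v - j + int t) \<noteq> 0"
      by (cases x) (auto simp: emul_idx_def)
    then show "x \<in> {-R..R} \<times> {-R..R} \<times> {..nat R} \<times> {..nat R}"
      using R[rule_format, of "int s" "int t" i j] by auto
  qed
  then show ?thesis by (rule finite_subset) auto
qed

lemma emul_term_support: "{x. emul_term A B u v x \<noteq> 0} \<subseteq> emul_idx A B u v"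
  by (auto simp: emul_term_def emul_idx_def)

lemma emul_term_finite_support:
  assumes "A \<in> PsiDO" "B \<in> PsiDO"
  shows "finite {x. emul_term A B u v x \<noteq> 0}"
  using emul_idx_finite[OF assms] emul_term_support by (rule finite_subset[rotated])

lemma emul_Sum_any:
  assumes "A \<in> PsiDO" "B \<in> PsiDO"
  shows "emul A B u v = Sum_any (emul_term A B u v)"
  unfolding emul_as_sum using Sum_any.expand_superset[OF emul_idx_finite[OF assms] emul_term_support]
  by metis

lemma emul_closed:
  assumes "A \<in> PsiDO" "B \<in> PsiDO"
  shows "emul A B \<in> PsiDO"
proof -
  obtain NA where NA: "\<forall>i j. j > NA \<longrightarrow> A i j = 0" using psido_row_bound[OF assms(1)] by blast
  obtain NB where NB: "\<forall>i j. j > NB \<longrightarrow> B i j = 0" using psido_row_bound[OF assms(2)] by blast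
  have rows: "emul A B u v = 0" if "v > NA + NB" for u v
  proof -
    have "emul_term A B u v x = 0" for x
    proof (cases x)
      case (fields i j s t)
      show ?thesis
      proof (cases "j \<le> NA")
        case True
        then have "v - j + int t > NB" using that by linarith
        then show ?thesis using NB by (simp add: fields emul_term_simp)
      qed (use NA in \<open>simp add: fields emul_term_simp\<close>)
    qed
    then show ?thesis by (simp add: emul_as_sum)
  qed
  have cols: "\<exists>M. \<forall>u. u > M \<longrightarrow> emul A B u v = 0" for v
  proof -
    obtain MA where MA: "\<forall>i j. j \<ge> v - NB \<longrightarrow> i > MA \<longrightarrow> A i j = 0" using psido_col_bound[OF assms(1)] by blast
    obtain MB where MB: "\<forall>i j. j \<ge> v - NA \<longrightarrow> i > MB \<longrightarrow> B i j = 0" using psido_col_bound[OF assms(2)] by blast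
    have "emul A B u v = 0" if "u > MA + MB" for u
    proof -
      have "emul_term A B u v x = 0" for x
      proof (rule ccontr)
        obtain i j s t where x: "x = (i, j, s, t)" by (metis prod.exhaust)
        assume "emul_term A B u v x \<noteq> 0"
        then have h: "A i j \<noteq> 0" "B (u - i + int s) (v - j + int t) \<noteq> 0" by (auto simp: x emul_term_simp)
        have "j \<le> NA" "v - j + int t \<le> NB" using h NA NB by (meson not_le)+
        then have "i \<le> MA" "u - i + int s \<le> MB"
          using h MA[rule_format, of j i] MB[rule_format, of "v - j + int t" "u - i + int s"] by linarith+
        then show False using that by linarith
      qed
      then show ?thesis by (simp add: emul_as_sum)
    qed
    then show ?thesis by blast
  qed
  show ?thesis unfolding PsiDO_def using rows cols by blast
qed

section \<open>Associativity\<close>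

lemma Sum_any_nested:
  assumes "finite {x. (case x of (a, b) \<Rightarrow> g a b) \<noteq> (0::'c::comm_monoid_add)}"
  shows "Sum_any (\<lambda>a. Sum_any (g a)) = Sum_any (\<lambda>(a, b). g a b)"
proof -
  let ?S = "{x. (case x of (a, b) \<Rightarrow> g a b) \<noteq> 0}"
  have "{a. \<exists>b. g a b \<noteq> 0} \<times> {b. \<exists>a. g a b \<noteq> 0} \<subseteq> fst ` ?S \<times> snd ` ?S"
    by (auto simp: image_iff)
  moreover have "finite (fst ` ?S \<times> snd ` ?S)" using assms by simp
  ultimately show ?thesis using Sum_any.cartesian_product by blast
qed

lemma Sum_any_reindex_inj:
  assumes "inj \<phi>" "\<And>x. x \<notin> range \<phi> \<Longrightarrow> F x = (0::'c::comm_monoid_add)"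
  shows "Sum_any F = Sum_any (F \<circ> \<phi>)"
proof -
  have "{x. F x \<noteq> 0} = \<phi> ` {y. F (\<phi> y) \<noteq> 0}"
    using assms(2) by (auto simp: image_iff) (metis rangeE)
  then have "sum F {x. F x \<noteq> 0} = sum (F \<circ> \<phi>) {y. F (\<phi> y) \<noteq> 0}"
    by (simp add: sum.reindex inj_on_subset[OF assms(1)])
  then show ?thesis by (simp add: Sum_any.expand_set)
qed

lemma pdiff_Sum_any:
  assumes "finite {x. f x \<noteq> 0}"
  shows "pdiff s t (Sum_any f) = Sum_any (\<lambda>x. pdiff s t (f x))"
proof -
  have "pdiff s t (Sum_any f) = (\<Sum>x\<in>{x. f x \<noteq> 0}. pdiff s t (f x))"
    by (simp add: Sum_any.expand_set pdiff_sum)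
  also have "\<dots> = Sum_any (\<lambda>x. pdiff s t (f x))"
    by (rule Sum_any.expand_superset[symmetric]) (use assms in auto)
  finally show ?thesis .
qed

lemma finite_support_slice:
  assumes "finite {x. F x \<noteq> (0::'c::zero)}"
  shows "finite {y. F (a, y) \<noteq> 0}"
proof -
  have "{y. F (a, y) \<noteq> 0} \<subseteq> snd ` {x. F x \<noteq> 0}" by (auto simp: image_iff)
  then show ?thesis using assms by (meson finite_imageI finite_subset)
qed

text \<open>The common ten-fold expansion of (AB)C and A(BC), indexed by
  (i, j, \<sigma>, \<tau>, p, q, l1, l2, r, w): the term a_ij d^(\<sigma>,\<tau>)(b_pq) d^(l+r)(c_..) with its coefficient.\<close>
definition assoc_term :: "'a::field_char_0 psido \<Rightarrow> 'a psido \<Rightarrow> 'a psido \<Rightarrow> int \<Rightarrow> int \<Rightarrow>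
   int \<times> int \<times> nat \<times> nat \<times> int \<times> int \<times> nat \<times> nat \<times> nat \<times> nat \<Rightarrow> 'a fps fps" where
  "assoc_term A B C u v = (\<lambda>(i, j, \<sigma>, \<tau>, p, q, l1, l2, r, w).
     A i j * pdiff \<sigma> \<tau> (B p q) * pdiff (l1 + r) (l2 + w) (C (u - i - p + int \<sigma> + int l1 + int r) (v - j - q + int \<tau> + int l2 + int w)) *
     kconst ((of_int i gchoose (\<sigma> + l1)) * of_nat ((\<sigma> + l1) choose \<sigma>) * (of_int p gchoose r) *
         ((of_int j gchoose (\<tau> + l2)) * of_nat ((\<tau> + l2) choose \<tau>) * (of_int q gchoose w))))"

text \<open>Expansion of (AB)C: outer index (i', j', s', t') of the product with C, inner index
  (i, j, s, t) of AB, and the splitting (l1, l2) produced by Vandermonde's identity.\<close>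
definition assoc_lhs_term :: "'a::field_char_0 psido \<Rightarrow> 'a psido \<Rightarrow> 'a psido \<Rightarrow> int \<Rightarrow> int \<Rightarrow>
   (int \<times> int \<times> nat \<times> nat) \<times> (int \<times> int \<times> nat \<times> nat) \<times> (nat \<times> nat) \<Rightarrow> 'a fps fps" where
  "assoc_lhs_term A B C u v = (\<lambda>((i', j', s', t'), (i, j, s, t), (l1, l2)).
     if l1 \<le> s' \<and> l2 \<le> t' then
       A i j * pdiff s t (B (i' - i + int s) (j' - j + int t)) * pdiff s' t' (C (u - i' + int s') (v - j' + int t')) *
       kconst ((of_int i gchoose (s + l1)) * of_nat ((s + l1) choose s) * (of_int (i' - i + int s) gchoose (s' - l1)) *
           ((of_int j gchoose (t + l2)) * of_nat ((t + l2) choose t) * (of_int (j' - j + int t) gchoose (t' - l2))))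
     else 0)"

text \<open>Expansion of A(BC): outer index (i, j, s, t), inner index (p, q, r, w) of BC, and the
  splitting (\<sigma>, \<tau>) produced by the Leibniz rule.\<close>
definition assoc_rhs_term :: "'a::field_char_0 psido \<Rightarrow> 'a psido \<Rightarrow> 'a psido \<Rightarrow> int \<Rightarrow> int \<Rightarrow>
   (int \<times> int \<times> nat \<times> nat) \<times> (int \<times> int \<times> nat \<times> nat) \<times> (nat \<times> nat) \<Rightarrow> 'a fps fps" where
  "assoc_rhs_term A B C u v = (\<lambda>((i, j, s, t), (p, q, r, w), (\<sigma>, \<tau>)).
     if \<sigma> \<le> s \<and> \<tau> \<le> t then
       A i j * pdiff \<sigma> \<tau> (B p q) * pdiff (s - \<sigma> + r) (t - \<tau> + w) (C (u - i + int s - p + int r) (v - j + int t - q + int w)) *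
       kconst ((of_int i gchoose s) * (of_int j gchoose t) * ((of_int p gchoose r) * (of_int q gchoose w)) *
           (of_nat (s choose \<sigma>) * of_nat (t choose \<tau>)))
     else 0)"

text \<open>The reindexings identifying the supports of both expansions with that of assoc_term.\<close>
definition lhs_index :: "int \<times> int \<times> nat \<times> nat \<times> int \<times> int \<times> nat \<times> nat \<times> nat \<times> nat \<Rightarrow>
    (int \<times> int \<times> nat \<times> nat) \<times> (int \<times> int \<times> nat \<times> nat) \<times> (nat \<times> nat)" where
  "lhs_index = (\<lambda>(i, j, \<sigma>, \<tau>, p, q, l1, l2, r, w). ((p + i - int \<sigma>, q + j - int \<tau>, l1 + r, l2 + w), (i, j, \<sigma>, \<tau>), (l1, l2)))"

definition rhs_index :: "int \<times> int \<times> nat \<times> nat \<times> int \<times> int \<times> nat \<times> nat \<times> nat \<times> nat \<Rightarrow>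
    (int \<times> int \<times> nat \<times> nat) \<times> (int \<times> int \<times> nat \<times> nat) \<times> (nat \<times> nat)" where
  "rhs_index = (\<lambda>(i, j, \<sigma>, \<tau>, p, q, l1, l2, r, w). ((i, j, \<sigma> + l1, \<tau> + l2), (p, q, r, w), (\<sigma>, \<tau>)))"

lemma inj_lhs_index: "inj lhs_index"
  unfolding inj_def lhs_index_def by auto

lemma inj_rhs_index: "inj rhs_index"
  unfolding inj_def rhs_index_def by auto

lemma assoc_lhs_term_reindex: "assoc_lhs_term A B C u v \<circ> lhs_index = assoc_term A B C u v"
  by (rule ext) (auto simp: assoc_lhs_term_def assoc_term_def lhs_index_def algebra_simps)

lemma assoc_rhs_term_reindex: "assoc_rhs_term A B C u v \<circ> rhs_index = assoc_term A B C u v"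
  by (rule ext) (auto simp: assoc_rhs_term_def assoc_term_def rhs_index_def algebra_simps)

lemma assoc_lhs_term_outside: "x \<notin> range lhs_index \<Longrightarrow> assoc_lhs_term A B C u v x = 0"
proof -
  assume x: "x \<notin> range lhs_index"
  obtain i' j' s' t' i j s t l1 l2 where xe: "x = ((i', j', s', t'), (i, j, s, t), (l1, l2))"
    by (metis prod.exhaust)
  have "\<not> (l1 \<le> s' \<and> l2 \<le> t')"
  proof
    assume "l1 \<le> s' \<and> l2 \<le> t'"
    then have "x = lhs_index (i, j, s, t, i' - i + int s, j' - j + int t, l1, l2, s' - l1, t' - l2)"
      by (simp add: xe lhs_index_def)
    then show False using x by blast
  qed
  then show ?thesis unfolding xe assoc_lhs_term_def by (simp only: prod.case if_False)
qed

lemma assoc_rhs_term_outside: "x \<notin> range rhs_index \<Longrightarrow> assoc_rhs_term A B C u v x = 0"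
proof -
  assume x: "x \<notin> range rhs_index"
  obtain i j s t p q r w \<sigma> \<tau> where xe: "x = ((i, j, s, t), (p, q, r, w), (\<sigma>, \<tau>))"
    by (metis prod.exhaust)
  have "\<not> (\<sigma> \<le> s \<and> \<tau> \<le> t)"
  proof
    assume "\<sigma> \<le> s \<and> \<tau> \<le> t"
    then have "x = rhs_index (i, j, \<sigma>, \<tau>, p, q, s - \<sigma>, t - \<tau>, r, w)"
      by (simp add: xe rhs_index_def)
    then show False using x by blast
  qed
  then show ?thesis unfolding xe assoc_rhs_term_def by (simp only: prod.case if_False)
qed

lemma le_natI: "int s \<le> R \<Longrightarrow> s \<le> nat R"
  by linarith

lemma assoc_lhs_term_finite:
  assumes "A \<in> PsiDO" "B \<in> PsiDO" "C \<in> PsiDO"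
  shows "finite {x. assoc_lhs_term A B C u v x \<noteq> 0}"
proof -
  obtain R where R: "\<forall>i j p q n1 n2. 0 \<le> n1 \<longrightarrow> 0 \<le> n2 \<longrightarrow> A i j \<noteq> 0 \<longrightarrow> B p q \<noteq> 0 \<longrightarrow>
     C (u - i - p + n1) (v - j - q + n2) \<noteq> 0
     \<longrightarrow> \<bar>i\<bar> \<le> R \<and> \<bar>j\<bar> \<le> R \<and> \<bar>p\<bar> \<le> R \<and> \<bar>q\<bar> \<le> R \<and> n1 \<le> R \<and> n2 \<le> R"
    using triple_support_bound[OF assms] by blast
  let ?S = "({-3*R..3*R} \<times> {-3*R..3*R} \<times> {..nat R} \<times> {..nat R}) \<times> ({-R..R} \<times> {-R..R} \<times> {..nat R} \<times> {..nat R}) \<times> ({..nat R} \<times> {..nat R})"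
  have "{x. assoc_lhs_term A B C u v x \<noteq> 0} \<subseteq> ?S"
  proof
    fix x assume "x \<in> {x. assoc_lhs_term A B C u v x \<noteq> 0}"
    moreover obtain i' j' s' t' i j s t l1 l2 where xe: "x = ((i', j', s', t'), (i, j, s, t), (l1, l2))"
      by (metis prod.exhaust)
    ultimately have h: "l1 \<le> s'" "l2 \<le> t'" "A i j \<noteq> 0" "B (i' - i + int s) (j' - j + int t) \<noteq> 0"
        "C (u - i' + int s') (v - j' + int t') \<noteq> 0"
      by (auto simp: assoc_lhs_term_def split: if_splits)
    have e: "u - i - (i' - i + int s) + (int s + int s') = u - i' + int s'"
            "v - j - (j' - j + int t) + (int t + int t') = v - j' + int t'" by simp_all
    have "\<bar>i\<bar> \<le> R \<and> \<bar>j\<bar> \<le> R \<and> \<bar>i' - i + int s\<bar> \<le> R \<and> \<bar>j' - j + int t\<bar> \<le> R \<and> int s + int s' \<le> R \<and> int t + int t' \<le> R"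
      using R[rule_format, of "int s + int s'" "int t + int t'" i j "i' - i + int s" "j' - j + int t", unfolded e] h
      by simp
    then show "x \<in> ?S" unfolding xe using h(1,2) by (auto intro!: le_natI)
  qed
  then show ?thesis by (rule finite_subset) simp
qed

lemma assoc_rhs_term_finite:
  assumes "A \<in> PsiDO" "B \<in> PsiDO" "C \<in> PsiDO"
  shows "finite {x. assoc_rhs_term A B C u v x \<noteq> 0}"
proof -
  obtain R where R: "\<forall>i j p q n1 n2. 0 \<le> n1 \<longrightarrow> 0 \<le> n2 \<longrightarrow> A i j \<noteq> 0 \<longrightarrow> B p q \<noteq> 0 \<longrightarrow>
     C (u - i - p + n1) (v - j - q + n2) \<noteq> 0
     \<longrightarrow> \<bar>i\<bar> \<le> R \<and> \<bar>j\<bar> \<le> R \<and> \<bar>p\<bar> \<le> R \<and> \<bar>q\<bar> \<le> R \<and> n1 \<le> R \<and> n2 \<le> R"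
    using triple_support_bound[OF assms] by blast
  let ?S = "({-R..R} \<times> {-R..R} \<times> {..nat R} \<times> {..nat R}) \<times> ({-R..R} \<times> {-R..R} \<times> {..nat R} \<times> {..nat R}) \<times> ({..nat R} \<times> {..nat R})"
  have "{x. assoc_rhs_term A B C u v x \<noteq> 0} \<subseteq> ?S"
  proof
    fix x assume "x \<in> {x. assoc_rhs_term A B C u v x \<noteq> 0}"
    moreover obtain i j s t p q r w \<sigma> \<tau> where xe: "x = ((i, j, s, t), (p, q, r, w), (\<sigma>, \<tau>))"
      by (metis prod.exhaust)
    ultimately have h: "\<sigma> \<le> s" "\<tau> \<le> t" "A i j \<noteq> 0" "B p q \<noteq> 0"
        "C (u - i + int s - p + int r) (v - j + int t - q + int w) \<noteq> 0"
      by (auto simp: assoc_rhs_term_def split: if_splits)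
    have e: "u - i - p + (int s + int r) = u - i + int s - p + int r"
            "v - j - q + (int t + int w) = v - j + int t - q + int w" by simp_all
    have "\<bar>i\<bar> \<le> R \<and> \<bar>j\<bar> \<le> R \<and> \<bar>p\<bar> \<le> R \<and> \<bar>q\<bar> \<le> R \<and> int s + int r \<le> R \<and> int t + int w \<le> R"
      using R[rule_format, of "int s + int r" "int t + int w" i j p q, unfolded e] h by simp
    then show "x \<in> ?S" unfolding xe using h(1,2) by (auto intro!: le_natI)
  qed
  then show ?thesis by (rule finite_subset) simp
qed

lemma sum_over_box:
  "(\<Sum>L\<in>{..a} \<times> {..b}. K * (f (fst L) * g (snd L))) = (K::'c::comm_semiring_1) * ((\<Sum>l\<le>a. f l) * (\<Sum>l\<le>b. g l))"
proof -
  have "(\<Sum>L\<in>{..a} \<times> {..b}. K * (f (fst L) * g (snd L))) = (\<Sum>x\<le>a. \<Sum>y\<le>b. K * (f x * g y))"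
    by (simp add: sum.cartesian_product split_def)
  also have "\<dots> = K * (\<Sum>x\<le>a. \<Sum>y\<le>b. f x * g y)" by (simp add: sum_distrib_left)
  also have "\<dots> = K * ((\<Sum>l\<le>a. f l) * (\<Sum>l\<le>b. g l))" by (simp add: sum_product)
  finally show ?thesis .
qed

lemma assoc_lhs_split:
  "emul_term A B i' j' (i, j, s, t) * (kconst ((of_int i' gchoose s') * (of_int j' gchoose t'))
     * pdiff s' t' (C (u - i' + int s') (v - j' + int t')))
   = Sum_any (\<lambda>L. assoc_lhs_term A B C u v ((i', j', s', t'), (i, j, s, t), L))"
proof -
  let ?K = "A i j * pdiff s t (B (i' - i + int s) (j' - j + int t)) * pdiff s' t' (C (u - i' + int s') (v - j' + int t'))"
  let ?a = "\<lambda>l1. (of_int i gchoose (s + l1)) * of_nat ((s + l1) choose s) * (of_int (i' - i + int s) gchoose (s' - l1))"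
  let ?b = "\<lambda>l2. (of_int j gchoose (t + l2)) * of_nat ((t + l2) choose t) * (of_int (j' - j + int t) gchoose (t' - l2))"
  have "Sum_any (\<lambda>L. assoc_lhs_term A B C u v ((i', j', s', t'), (i, j, s, t), L))
      = (\<Sum>L\<in>{..s'} \<times> {..t'}. assoc_lhs_term A B C u v ((i', j', s', t'), (i, j, s, t), L))"
    by (rule Sum_any.expand_superset) (auto simp: assoc_lhs_term_def split: if_splits)
  also have "\<dots> = (\<Sum>L\<in>{..s'} \<times> {..t'}. ?K * (kconst (?a (fst L)) * kconst (?b (snd L))))"
    by (rule sum.cong) (auto simp: assoc_lhs_term_def kconst_mult)
  also have "\<dots> = ?K * ((\<Sum>l1\<le>s'. kconst (?a l1)) * (\<Sum>l2\<le>t'. kconst (?b l2)))"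
    by (rule sum_over_box)
  also have "\<dots> = ?K * (kconst (\<Sum>l1\<le>s'. ?a l1) * kconst (\<Sum>l2\<le>t'. ?b l2))"
    by (simp only: kconst_sum)
  also have "\<dots> = ?K * (kconst ((of_int i gchoose s) * (of_int i' gchoose s')) * kconst ((of_int j gchoose t) * (of_int j' gchoose t')))"
    by (simp only: gchoose_product_vandermonde)
  finally show ?thesis by (simp add: emul_term_simp kconst_mult mult_ac)
qed

lemma assoc_rhs_split:
  "A i j * kconst ((of_int i gchoose s) * (of_int j gchoose t)) * pdiff s t (emul_term B C (u - i + int s) (v - j + int t) (p, q, r, w))
   = Sum_any (\<lambda>S. assoc_rhs_term A B C u v ((i, j, s, t), (p, q, r, w), S))"
proof -
  let ?C = "C (u - i + int s - p + int r) (v - j + int t - q + int w)"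
  let ?c1 = "(of_int i gchoose s) * (of_int j gchoose t)"
  let ?c2 = "(of_int p gchoose r) * (of_int q gchoose w)"
  let ?f = "\<lambda>\<sigma> \<tau>. kconst (of_nat (s choose \<sigma>) * of_nat (t choose \<tau>)) * (pdiff \<sigma> \<tau> (B p q) * pdiff (s + r - \<sigma>) (t + w - \<tau>) ?C)"
  have "Sum_any (\<lambda>S. assoc_rhs_term A B C u v ((i, j, s, t), (p, q, r, w), S))
      = (\<Sum>S\<in>{..s} \<times> {..t}. assoc_rhs_term A B C u v ((i, j, s, t), (p, q, r, w), S))"
    by (rule Sum_any.expand_superset) (auto simp: assoc_rhs_term_def split: if_splits)
  also have "\<dots> = (\<Sum>S\<in>{..s} \<times> {..t}. A i j * kconst ?c1 * kconst ?c2 * ?f (fst S) (snd S))"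
    by (rule sum.cong) (auto simp: assoc_rhs_term_def kconst_mult mult_ac)
  also have "\<dots> = A i j * kconst ?c1 * kconst ?c2 * (\<Sum>\<sigma>\<le>s. \<Sum>\<tau>\<le>t. ?f \<sigma> \<tau>)"
    by (simp add: sum.cartesian_product split_def sum_distrib_left)
  also have "(\<Sum>\<sigma>\<le>s. \<Sum>\<tau>\<le>t. ?f \<sigma> \<tau>) = pdiff s t (B p q * pdiff r w ?C)"
    by (simp add: pdiff_leibniz pdiff_pdiff)
  also have "A i j * kconst ?c1 * kconst ?c2 * pdiff s t (B p q * pdiff r w ?C)
      = A i j * kconst ?c1 * pdiff s t (emul_term B C (u - i + int s) (v - j + int t) (p, q, r, w))"
  proof -
    have "emul_term B C (u - i + int s) (v - j + int t) (p, q, r, w) = kconst ?c2 * (B p q * pdiff r w ?C)"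
      by (simp add: emul_term_simp mult_ac)
    then show ?thesis by (simp only: pdiff_kconst) (simp add: mult_ac)
  qed
  finally show ?thesis by simp
qed

lemma emul_emul_left_expansion:
  assumes A: "A \<in> PsiDO" and B: "B \<in> PsiDO" and C: "C \<in> PsiDO"
  shows "emul (emul A B) C u v = Sum_any (assoc_term A B C u v)"
proof -
  have fin: "finite {x. assoc_lhs_term A B C u v x \<noteq> 0}" using assoc_lhs_term_finite[OF A B C] .
  have outer: "emul_term (emul A B) C u v P = Sum_any (\<lambda>IL. assoc_lhs_term A B C u v (P, IL))" for P
  proof -
    obtain i' j' s' t' where Pe: "P = (i', j', s', t')" by (metis prod.exhaust)
    let ?W = "kconst ((of_int i' gchoose s') * (of_int j' gchoose t')) * pdiff s' t' (C (u - i' + int s') (v - j' + int t'))"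
    have "emul_term (emul A B) C u v P = Sum_any (emul_term A B i' j') * ?W"
      by (simp add: Pe emul_term_simp emul_Sum_any[OF A B] mult.assoc)
    also have "\<dots> = Sum_any (\<lambda>I. emul_term A B i' j' I * ?W)"
      by (rule Sum_any_left_distrib[OF emul_term_finite_support[OF A B]])
    also have "\<dots> = Sum_any (\<lambda>I. Sum_any (\<lambda>L. assoc_lhs_term A B C u v (P, I, L)))"
    proof (rule Sum_any.cong)
      fix I :: "int \<times> int \<times> nat \<times> nat"
      obtain i j s t where Ie: "I = (i, j, s, t)" by (metis prod.exhaust)
      show "emul_term A B i' j' I * ?W = Sum_any (\<lambda>L. assoc_lhs_term A B C u v (P, I, L))"
        unfolding Ie Pe by (rule assoc_lhs_split)
    qed
    also have "\<dots> = Sum_any (\<lambda>(I, L). assoc_lhs_term A B C u v (P, I, L))"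
      by (rule Sum_any_nested) (use finite_support_slice[OF fin, of P] in simp)
    finally show ?thesis by (simp add: case_prod_beta')
  qed
  have "emul (emul A B) C u v = Sum_any (\<lambda>P. Sum_any (\<lambda>IL. assoc_lhs_term A B C u v (P, IL)))"
    unfolding emul_Sum_any[OF emul_closed[OF A B] C] outer by (rule refl)
  also have "\<dots> = Sum_any (assoc_lhs_term A B C u v)"
    by (subst Sum_any_nested) (use fin in \<open>simp_all add: case_prod_beta'\<close>)
  also have "\<dots> = Sum_any (assoc_lhs_term A B C u v \<circ> lhs_index)"
    by (rule Sum_any_reindex_inj[OF inj_lhs_index assoc_lhs_term_outside])
  finally show ?thesis by (simp add: assoc_lhs_term_reindex)
qed

lemma emul_emul_right_expansion:
  assumes A: "A \<in> PsiDO" and B: "B \<in> PsiDO" and C: "C \<in> PsiDO"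
  shows "emul A (emul B C) u v = Sum_any (assoc_term A B C u v)"
proof -
  have fin: "finite {x. assoc_rhs_term A B C u v x \<noteq> 0}" using assoc_rhs_term_finite[OF A B C] .
  have outer: "emul_term A (emul B C) u v I = Sum_any (\<lambda>QS. assoc_rhs_term A B C u v (I, QS))" for I
  proof -
    obtain i j s t where Ie: "I = (i, j, s, t)" by (metis prod.exhaust)
    let ?x = "u - i + int s" and ?y = "v - j + int t"
    let ?c = "A i j * kconst ((of_int i gchoose s) * (of_int j gchoose t))"
    have fin_inner: "finite {Q. pdiff s t (emul_term B C ?x ?y Q) \<noteq> 0}"
      using emul_term_finite_support[OF B C, of ?x ?y] by (rule rev_finite_subset) auto
    have "emul_term A (emul B C) u v I = ?c * pdiff s t (Sum_any (emul_term B C ?x ?y))"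
      by (simp add: Ie emul_term_simp emul_Sum_any[OF B C])
    also have "\<dots> = Sum_any (\<lambda>Q. ?c * pdiff s t (emul_term B C ?x ?y Q))"
      by (simp add: pdiff_Sum_any[OF emul_term_finite_support[OF B C]] Sum_any_right_distrib[OF fin_inner])
    also have "\<dots> = Sum_any (\<lambda>Q. Sum_any (\<lambda>S. assoc_rhs_term A B C u v (I, Q, S)))"
    proof (rule Sum_any.cong)
      fix Q :: "int \<times> int \<times> nat \<times> nat"
      obtain p q r w where Qe: "Q = (p, q, r, w)" by (metis prod.exhaust)
      show "?c * pdiff s t (emul_term B C ?x ?y Q) = Sum_any (\<lambda>S. assoc_rhs_term A B C u v (I, Q, S))"
        unfolding Ie Qe by (rule assoc_rhs_split)
    qed
    also have "\<dots> = Sum_any (\<lambda>(Q, S). assoc_rhs_term A B C u v (I, Q, S))"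
      by (rule Sum_any_nested) (use finite_support_slice[OF fin, of I] in simp)
    finally show ?thesis by (simp add: case_prod_beta')
  qed
  have "emul A (emul B C) u v = Sum_any (\<lambda>I. Sum_any (\<lambda>QS. assoc_rhs_term A B C u v (I, QS)))"
    unfolding emul_Sum_any[OF A emul_closed[OF B C]] outer by (rule refl)
  also have "\<dots> = Sum_any (assoc_rhs_term A B C u v)"
    by (subst Sum_any_nested) (use fin in \<open>simp_all add: case_prod_beta'\<close>)
  also have "\<dots> = Sum_any (assoc_rhs_term A B C u v \<circ> rhs_index)"
    by (rule Sum_any_reindex_inj[OF inj_rhs_index assoc_rhs_term_outside])
  finally show ?thesis by (simp add: assoc_rhs_term_reindex)
qed

theorem emul_assoc:
  assumes "A \<in> PsiDO" "B \<in> PsiDO" "C \<in> PsiDO"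
  shows "emul (emul A B) C = emul A (emul B C)"
  by (intro ext) (simp add: emul_emul_left_expansion[OF assms] emul_emul_right_expansion[OF assms])

section \<open>Unit and distributivity\<close>

lemma emul_one_left:
  assumes "B \<in> PsiDO"
  shows "emul eone B = B"
proof (intro ext)
  fix u v
  have "emul_term eone B u v x = (if x = (0, 0, 0, 0) then B u v else 0)" for x
    by (cases x) (auto simp: emul_term_simp eone_def gbinomial_0_left)
  then show "emul eone B u v = B u v"
    by (simp add: emul_Sum_any[OF psido_one assms])
qed

lemma emul_one_right:
  assumes "A \<in> PsiDO"
  shows "emul A eone = A"
proof (intro ext)
  fix u v
  have "emul_term A eone u v x = (if x = (u, v, 0, 0) then A u v else 0)" for x
    by (cases x) (auto simp: emul_term_simp eone_def pdiff_1)
  then show "emul A eone u v = A u v"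
    by (simp add: emul_Sum_any[OF assms psido_one])
qed

lemma psido_add:
  assumes "A \<in> PsiDO" "B \<in> PsiDO"
  shows "eadd A B \<in> PsiDO"
proof -
  obtain NA where NA: "\<forall>i j. j > NA \<longrightarrow> A i j = 0" using psido_row_bound[OF assms(1)] by blast
  obtain NB where NB: "\<forall>i j. j > NB \<longrightarrow> B i j = 0" using psido_row_bound[OF assms(2)] by blast
  have rows: "\<forall>i j. j > max NA NB \<longrightarrow> eadd A B i j = 0" using NA NB by (simp add: eadd_def)
  have cols: "\<exists>M. \<forall>i. i > M \<longrightarrow> eadd A B i j = 0" for j
  proof -
    obtain MA where MA: "\<forall>i. i > MA \<longrightarrow> A i j = 0" using assms(1) unfolding PsiDO_def by blast
    obtain MB where MB: "\<forall>i. i > MB \<longrightarrow> B i j = 0" using assms(2) unfolding PsiDO_def by blast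
    show ?thesis using MA MB by (intro exI[of _ "max MA MB"]) (simp add: eadd_def)
  qed
  show ?thesis unfolding PsiDO_def using rows cols by blast
qed

lemma emul_distrib_left:
  assumes "A \<in> PsiDO" "B \<in> PsiDO" "C \<in> PsiDO"
  shows "emul (eadd A B) C = eadd (emul A C) (emul B C)"
proof (intro ext)
  fix u v
  have "emul_term (eadd A B) C u v x = emul_term A C u v x + emul_term B C u v x" for x
    by (cases x) (simp add: emul_term_simp eadd_def algebra_simps)
  then have "Sum_any (emul_term (eadd A B) C u v) = Sum_any (\<lambda>x. emul_term A C u v x + emul_term B C u v x)"
    by simp
  also have "\<dots> = Sum_any (emul_term A C u v) + Sum_any (emul_term B C u v)"
    by (rule Sum_any.distrib[OF emul_term_finite_support emul_term_finite_support]) (use assms in auto)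
  finally show "emul (eadd A B) C u v = eadd (emul A C) (emul B C) u v"
    unfolding emul_Sum_any[OF psido_add[OF assms(1,2)] assms(3)]
    by (simp add: eadd_def emul_Sum_any[OF assms(1,3)] emul_Sum_any[OF assms(2,3)])
qed

lemma emul_distrib_right:
  assumes "A \<in> PsiDO" "B \<in> PsiDO" "C \<in> PsiDO"
  shows "emul C (eadd A B) = eadd (emul C A) (emul C B)"
proof (intro ext)
  fix u v
  have "emul_term C (eadd A B) u v x = emul_term C A u v x + emul_term C B u v x" for x
    by (cases x) (simp add: emul_term_simp eadd_def pdiff_add algebra_simps)
  then have "Sum_any (emul_term C (eadd A B) u v) = Sum_any (\<lambda>x. emul_term C A u v x + emul_term C B u v x)"
    by simp
  also have "\<dots> = Sum_any (emul_term C A u v) + Sum_any (emul_term C B u v)"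
    by (rule Sum_any.distrib[OF emul_term_finite_support emul_term_finite_support]) (use assms in auto)
  finally show "emul C (eadd A B) u v = eadd (emul C A) (emul C B) u v"
    unfolding emul_Sum_any[OF assms(3) psido_add[OF assms(1,2)]]
    by (simp add: eadd_def emul_Sum_any[OF assms(3,1)] emul_Sum_any[OF assms(3,2)])
qed

section \<open>Operators without negative powers of d1\<close>

text \<open>If neither factor involves negative powers of d1, neither does the product: a summand
  with u < 0 needs s > i \<ge> 0, where (i gchoose s) vanishes.\<close>
lemma emul_no_negative_d1:
  assumes A: "\<forall>i j. i < 0 \<longrightarrow> A i j = 0" and B: "\<forall>i j. i < 0 \<longrightarrow> B i j = 0" and "u < 0"
  shows "emul A B u v = 0"
proof -
  have "emul_term A B u v x = 0" for x
  proof (cases x)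
    case (fields i j s t)
    show ?thesis
    proof (cases "A i j = 0 \<or> B (u - i + int s) (v - j + int t) = 0")
      case False
      then have "0 \<le> i" "0 \<le> u - i + int s" using A B by (meson not_le)+
      then have "(of_int i gchoose s :: 'a) = 0" using \<open>u < 0\<close> by (intro gchoose_int_zero) auto
      then show ?thesis by (simp add: fields emul_term_simp)
    qed (auto simp: fields emul_term_simp)
  qed
  then show ?thesis by (simp add: emul_as_sum)
qed

lemma epoly_mult:
  assumes "A \<in> Epoly" "B \<in> Epoly"
  shows "emul A B \<in> Epoly"
proof -
  have "A \<in> PsiDO" "B \<in> PsiDO"
    and A: "\<forall>i j. i < 0 \<longrightarrow> A i j = 0" and B: "\<forall>i j. i < 0 \<longrightarrow> B i j = 0"
    using assms by (simp_all add: Epoly_def)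
  then show ?thesis using emul_no_negative_d1[OF A B] by (simp add: Epoly_def emul_closed)
qed

lemma lift_psido:
  assumes "v \<in> Vsp"
  shows "lift v \<in> PsiDO"
proof -
  obtain M where M: "\<forall>n m. m < M \<longrightarrow> v n m = 0" using assms unfolding Vsp_def by blast
  have rows: "\<forall>i j. j > - M \<longrightarrow> lift v i j = 0" using M by (simp add: lift_def)
  have cols: "\<exists>K. \<forall>i. i > K \<longrightarrow> lift v i j = 0" for j
  proof -
    obtain N where N: "\<forall>n. n < N \<longrightarrow> v n (- j) = 0" using assms unfolding Vsp_def by blast
    show ?thesis using N by (intro exI[of _ "- N"]) (simp add: lift_def)
  qed
  show ?thesis unfolding PsiDO_def using rows cols by blast
qed

lemma proj_vsp:
  assumes "X \<in> PsiDO"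
  shows "proj X \<in> Vsp"
proof -
  obtain N where N: "\<forall>i j. j > N \<longrightarrow> X i j = 0" using psido_row_bound[OF assms] by blast
  have rows: "\<forall>n m. m < - N \<longrightarrow> proj X n m = 0" using N by (simp add: proj_def pval0_def)
  have cols: "\<exists>K. \<forall>n. n < K \<longrightarrow> proj X n m = 0" for m
  proof -
    obtain M where M: "\<forall>i. i > M \<longrightarrow> X i (- m) = 0" using assms unfolding PsiDO_def by blast
    show ?thesis using M by (intro exI[of _ "- M"]) (simp add: proj_def pval0_def)
  qed
  show ?thesis unfolding Vsp_def using rows cols by blast
qed

lemma ract_vsp: "v \<in> Vsp \<Longrightarrow> A \<in> PsiDO \<Longrightarrow> ract v A \<in> Vsp"
  unfolding ract_def by (intro proj_vsp emul_closed lift_psido)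

lemma epoly_sub_eplus:
  assumes "A \<in> Epoly"
  shows "A \<in> Eplus"
proof -
  have AP: "A \<in> PsiDO" using assms by (simp add: Epoly_def)
  have "ract v A \<in> Wl" if v: "v \<in> Wl" for v
  proof -
    have "\<forall>i j. i < 0 \<longrightarrow> lift v i j = 0" using v by (simp add: Wl_def lift_def)
    then have "ract v A n m = 0" if "n > 0" for n m
      using emul_no_negative_d1[of "lift v" A "- n"] assms that by (simp add: Epoly_def ract_def proj_def pval0_def)
    then show ?thesis using ract_vsp[OF _ AP] v by (simp add: Wl_def)
  qed
  then show ?thesis using AP by (simp add: Eplus_def)
qed

definition zmonomial :: "nat \<Rightarrow> nat \<Rightarrow> int \<Rightarrow> int \<Rightarrow> 'a::field_char_0" where
  "zmonomial a b = (\<lambda>n m. if n = - int a \<and> m = - int b then 1 else 0)"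

lemma zmonomial_Wl: "zmonomial a b \<in> Wl"
proof -
  have "\<forall>n m. m < - int b \<longrightarrow> zmonomial a b n m = 0" "\<forall>n m. n > 0 \<longrightarrow> zmonomial a b n m = 0"
    by (simp_all add: zmonomial_def)
  moreover have "\<exists>N. \<forall>n. n < N \<longrightarrow> zmonomial a b n m = 0" for m
    by (intro exI[of _ "- int a"]) (simp add: zmonomial_def)
  ultimately show ?thesis unfolding Wl_def Vsp_def by blast
qed

lemma ract_zmonomial:
  assumes AP: "A \<in> PsiDO"
  shows "ract (zmonomial a b) A (- x) (- y) =
    (\<Sum>s\<le>a. \<Sum>t\<le>b. (of_int (int a) gchoose s) * (of_int (int b) gchoose t) *
       (of_nat (fact s) * of_nat (fact t) * (A (x - int a + int s) (y - int b + int t) $ t) $ s))"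
proof -
  let ?F = "\<lambda>(s, t). kconst ((of_int (int a) gchoose s) * (of_int (int b) gchoose t)) * pdiff s t (A (x - int a + int s) (y - int b + int t))"
  define \<rho> where "\<rho> = (\<lambda>(s::nat, t::nat). (int a, int b, s, t))"
  have inj: "inj \<rho>" unfolding \<rho>_def inj_def by auto
  have lift_mon: "lift (zmonomial a b) = (\<lambda>i j. if i = int a \<and> j = int b then 1 else 0)"
    by (intro ext) (auto simp: lift_def zmonomial_def)
  have LP: "lift (zmonomial a b) \<in> PsiDO" using lift_psido zmonomial_Wl[of a b] unfolding Wl_def by blast
  have "emul (lift (zmonomial a b)) A x y = Sum_any (emul_term (lift (zmonomial a b)) A x y \<circ> \<rho>)"
    unfolding emul_Sum_any[OF LP AP]
  proof (rule Sum_any_reindex_inj[OF inj])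
    fix z assume "z \<notin> range \<rho>"
    then show "emul_term (lift (zmonomial a b)) A x y z = 0"
      by (cases z) (auto simp: emul_term_simp lift_mon \<rho>_def)
  qed
  also have "\<dots> = Sum_any ?F"
    by (intro Sum_any.cong) (auto simp: emul_term_simp lift_mon \<rho>_def)
  also have "\<dots> = sum ?F ({..a} \<times> {..b})"
  proof (rule Sum_any.expand_superset)
    show "{z. ?F z \<noteq> 0} \<subseteq> {..a} \<times> {..b}"
    proof (rule subsetI, rule ccontr)
      fix z assume "z \<in> {z. ?F z \<noteq> 0}" "z \<notin> {..a} \<times> {..b}"
      then obtain s t where z: "z = (s, t)" "a < s \<or> b < t" "?F z \<noteq> 0" by (cases z) auto
      have "(of_int (int a) gchoose s :: 'a) = 0 \<or> (of_int (int b) gchoose t :: 'a) = 0"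
        using z(2) gchoose_int_zero[of "int a" s] gchoose_int_zero[of "int b" t] by auto
      then show False using z by auto
    qed
  qed simp
  finally have "emul (lift (zmonomial a b)) A x y = (\<Sum>s\<le>a. \<Sum>t\<le>b. ?F (s, t))"
    by (simp add: sum.cartesian_product)
  then show ?thesis by (simp add: ract_def proj_def pval0_sum pval0_kconst pval0_pdiff)
qed

lemma double_sum_single_term:
  fixes a b :: nat
  assumes "\<And>s t. s \<le> a \<Longrightarrow> t \<le> b \<Longrightarrow> \<not> (s = a \<and> t = b) \<Longrightarrow> h s t = (0::'c::comm_monoid_add)"
  shows "(\<Sum>s\<le>a. \<Sum>t\<le>b. h s t) = h a b"
proof -
  have "(\<Sum>t\<le>b. h s t) = (if s = a then h a b else 0)" if "s \<le> a" for s
  proof (cases "s = a")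
    case True
    then have "(\<Sum>t\<le>b. h s t) = (\<Sum>t\<le>b. if t = b then h a b else 0)"
      using assms[of a] by (intro sum.cong) auto
    then show ?thesis using True by simp
  qed (use assms that in simp)
  then have "(\<Sum>s\<le>a. \<Sum>t\<le>b. h s t) = (\<Sum>s\<le>a. if s = a then h a b else 0)"
    by (intro sum.cong) auto
  then show ?thesis by simp
qed

text \<open>Conversely, an operator preserving W_l has no negative powers of d1: testing on
  z1^-a z2^-b shows that the coefficient of x1^a x2^b in A x y vanishes for x < 0,
  by induction on a + b (the lower-order terms vanish by the induction hypothesis).\<close>
lemma eplus_sub_epoly:
  assumes "A \<in> Eplus"
  shows "A \<in> Epoly"
proof -
  have AP: "A \<in> PsiDO" and preserves: "\<And>v. v \<in> Wl \<Longrightarrow> ract v A \<in> Wl"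
    using assms by (auto simp: Eplus_def)
  have vanish: "\<forall>a b. a + b = k \<longrightarrow> (\<forall>x y. x < 0 \<longrightarrow> (A x y $ b) $ a = 0)" for k
  proof (induction k rule: less_induct)
    case (less k)
    show ?case
    proof (intro allI impI)
      fix a b x y assume ab: "a + b = k" and x: "x < (0::int)"
      let ?h = "\<lambda>s t. (of_int (int a) gchoose s) * (of_int (int b) gchoose t) *
         (of_nat (fact s) * of_nat (fact t) * (A (x - int a + int s) (y - int b + int t) $ t) $ s :: 'a)"
      have "ract (zmonomial a b) A (- x) (- y) = 0"
        using preserves[OF zmonomial_Wl[of a b]] x by (simp add: Wl_def)
      then have "(\<Sum>s\<le>a. \<Sum>t\<le>b. ?h s t) = 0" by (simp add: ract_zmonomial[OF AP])
      moreover have "(\<Sum>s\<le>a. \<Sum>t\<le>b. ?h s t) = ?h a b"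
      proof (rule double_sum_single_term)
        fix s t assume st: "s \<le> a" "t \<le> b" "\<not> (s = a \<and> t = b)"
        then have "s + t < k" "x - int a + int s < 0" using ab x by auto
        then have "(A (x - int a + int s) (y - int b + int t) $ t) $ s = 0" using less by blast
        then show "?h s t = 0" by simp
      qed
      moreover have "(of_int (int a) gchoose a :: 'a) = 1" "(of_int (int b) gchoose b :: 'a) = 1"
        by (simp_all add: binomial_gbinomial[symmetric])
      ultimately show "(A x y $ b) $ a = 0" by simp
    qed
  qed
  have "A x y = 0" if "x < 0" for x y
  proof (rule fps_ext)
    fix b show "A x y $ b = 0 $ b"
      by (rule fps_ext) (use vanish[of "_ + b"] that in auto)
  qed
  then show ?thesis using AP by (simp add: Epoly_def)
qed

theorem Eplus_eq: "Eplus = Epoly"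
  using eplus_sub_epoly epoly_sub_eplus by blast

section \<open>Additive structure\<close>

definition eneg :: "'a::comm_ring_1 psido \<Rightarrow> 'a psido" where
  "eneg A = (\<lambda>i j. - A i j)"

lemma psido_neg: "A \<in> PsiDO \<Longrightarrow> eneg A \<in> PsiDO"
  by (simp add: PsiDO_def eneg_def)

lemma psido_restrict:
  assumes "A \<in> PsiDO"
  shows "(\<lambda>i j. if c i then 0 else A i j) \<in> PsiDO"
proof -
  obtain N where "\<forall>i j. j > N \<longrightarrow> A i j = 0" using psido_row_bound[OF assms] by blast
  moreover have "\<exists>M. \<forall>i. i > M \<longrightarrow> (if c i then 0 else A i j) = 0" for j
  proof -
    obtain M where "\<forall>i. i > M \<longrightarrow> A i j = 0" using assms unfolding PsiDO_def by blast
    then show ?thesis by (intro exI[of _ M]) simp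
  qed
  ultimately show ?thesis unfolding PsiDO_def by auto
qed

lemma inv_E_addgroup:
  assumes "(x :: 'a::field_char_0 psido) \<in> PsiDO"
  shows "inv\<^bsub>E_addgroup\<^esub> x = eneg x"
  unfolding m_inv_def
proof (rule the_equality)
  have "eadd x (eneg x) = ezero" "eadd (eneg x) x = ezero"
    by (simp_all add: eadd_def eneg_def ezero_def)
  then show "eneg x \<in> carrier E_addgroup \<and> x \<otimes>\<^bsub>E_addgroup\<^esub> eneg x = \<one>\<^bsub>E_addgroup\<^esub>
      \<and> eneg x \<otimes>\<^bsub>E_addgroup\<^esub> x = \<one>\<^bsub>E_addgroup\<^esub>"
    using psido_neg[OF assms] by (simp add: E_addgroup_def)
next
  fix y assume "y \<in> carrier E_addgroup \<and> x \<otimes>\<^bsub>E_addgroup\<^esub> y = \<one>\<^bsub>E_addgroup\<^esub> \<and> y \<otimes>\<^bsub>E_addgroup\<^esub> x = \<one>\<^bsub>E_addgroup\<^esub>"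
  then have "eadd x y = ezero" by (simp add: E_addgroup_def)
  then have "\<forall>i j. x i j + y i j = 0" by (metis eadd_def ezero_def)
  then show "y = eneg x" by (intro ext) (simp add: eneg_def eq_neg_iff_add_eq_0 add.commute)
qed

text \<open>The operators whose coefficient of d1^i vanishes for every i satisfying c.  Both
  E_+ (c i = i < 0) and E_- (c i = i \<ge> 0) are of this form.\<close>
definition vanish_on :: "(int \<Rightarrow> bool) \<Rightarrow> 'a::comm_ring_1 psido set" where
  "vanish_on c = {A \<in> PsiDO. \<forall>i j. c i \<longrightarrow> A i j = 0}"

lemma Epoly_vanish_on: "Epoly = vanish_on (\<lambda>i. i < 0)"
  by (simp add: Epoly_def vanish_on_def)

lemma Eminus_vanish_on: "Eminus = vanish_on (\<lambda>i. \<not> i < 0)"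
  by (simp add: Eminus_def vanish_on_def not_less)

lemma vanish_on_zero: "ezero \<in> vanish_on c"
  by (simp add: vanish_on_def psido_zero) (simp add: ezero_def)

lemma vanish_on_add: "A \<in> vanish_on c \<Longrightarrow> B \<in> vanish_on c \<Longrightarrow> eadd A B \<in> vanish_on c"
  by (simp add: vanish_on_def psido_add) (simp add: eadd_def)

lemma vanish_on_neg: "A \<in> vanish_on c \<Longrightarrow> eneg A \<in> vanish_on c"
  by (simp add: vanish_on_def psido_neg) (simp add: eneg_def)

lemma subgroup_vanish_on: "subgroup (vanish_on c :: 'a::field_char_0 psido set) E_addgroup"
proof (rule subgroup.intro)
  show "vanish_on c \<subseteq> carrier E_addgroup"
    by (auto simp: vanish_on_def E_addgroup_def)
  show "x \<otimes>\<^bsub>E_addgroup\<^esub> y \<in> vanish_on c" if "x \<in> vanish_on c" "y \<in> vanish_on c" for x y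
    using that by (simp add: E_addgroup_def vanish_on_add)
  show "\<one>\<^bsub>E_addgroup\<^esub> \<in> vanish_on c"
    by (simp add: E_addgroup_def vanish_on_zero)
  show "inv\<^bsub>E_addgroup\<^esub> x \<in> vanish_on c" if "x \<in> vanish_on c" for x
  proof -
    have "x \<in> PsiDO" using that by (simp add: vanish_on_def)
    then show ?thesis using that by (simp add: inv_E_addgroup vanish_on_neg)
  qed
qed

lemma vanish_on_decomposition:
  assumes "A \<in> PsiDO"
  shows "\<exists>!PM. fst PM \<in> vanish_on c \<and> snd PM \<in> vanish_on (\<lambda>i. \<not> c i) \<and> A = eadd (fst PM) (snd PM)"
proof (rule ex1I)
  let ?P = "\<lambda>i j. if c i then 0 else A i j"
  let ?M = "\<lambda>i j. if \<not> c i then 0 else A i j"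
  show "fst (?P, ?M) \<in> vanish_on c \<and> snd (?P, ?M) \<in> vanish_on (\<lambda>i. \<not> c i) \<and> A = eadd (fst (?P, ?M)) (snd (?P, ?M))"
    using psido_restrict[OF assms, of c] psido_restrict[OF assms, of "\<lambda>i. \<not> c i"]
    by (auto simp: vanish_on_def eadd_def intro!: ext)
  fix PM assume "fst PM \<in> vanish_on c \<and> snd PM \<in> vanish_on (\<lambda>i. \<not> c i) \<and> A = eadd (fst PM) (snd PM)"
  then have "fst PM = ?P" "snd PM = ?M"
    by (auto simp: vanish_on_def eadd_def intro!: ext)
  then show "PM = (?P, ?M)" by (simp add: prod_eq_iff)
qed

section \<open>The ring structure\<close>

lemma ring_of_closed_set:
  fixes S :: "'a::field_char_0 psido set"
  assumes sub: "S \<subseteq> PsiDO" and zero: "ezero \<in> S" and one: "eone \<in> S"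
    and add: "\<And>A B. A \<in> S \<Longrightarrow> B \<in> S \<Longrightarrow> eadd A B \<in> S"
    and neg: "\<And>A. A \<in> S \<Longrightarrow> eneg A \<in> S"
    and mult: "\<And>A B. A \<in> S \<Longrightarrow> B \<in> S \<Longrightarrow> emul A B \<in> S"
  shows "ring \<lparr>carrier = S, monoid.mult = emul, one = eone, zero = ezero, add = eadd\<rparr>"
    (is "ring ?R")
proof (rule ringI)
  show "abelian_group ?R"
  proof (rule abelian_groupI)
    fix x y z
    show "x \<oplus>\<^bsub>?R\<^esub> y \<oplus>\<^bsub>?R\<^esub> z = x \<oplus>\<^bsub>?R\<^esub> (y \<oplus>\<^bsub>?R\<^esub> z)"
      by (simp add: eadd_def add.assoc)
    show "x \<oplus>\<^bsub>?R\<^esub> y = y \<oplus>\<^bsub>?R\<^esub> x"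
      by (simp add: eadd_def add.commute)
    show "\<zero>\<^bsub>?R\<^esub> \<oplus>\<^bsub>?R\<^esub> x = x"
      by (simp add: eadd_def ezero_def)
    assume "x \<in> carrier ?R"
    then show "\<exists>y\<in>carrier ?R. y \<oplus>\<^bsub>?R\<^esub> x = \<zero>\<^bsub>?R\<^esub>"
      using neg by (intro bexI[of _ "eneg x"]) (simp_all add: eadd_def eneg_def ezero_def)
  qed (simp_all add: zero add)
  show "monoid ?R"
  proof (rule monoidI)
    fix x y z
    assume "x \<in> carrier ?R" "y \<in> carrier ?R" "z \<in> carrier ?R"
    then show "x \<otimes>\<^bsub>?R\<^esub> y \<otimes>\<^bsub>?R\<^esub> z = x \<otimes>\<^bsub>?R\<^esub> (y \<otimes>\<^bsub>?R\<^esub> z)"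
      using sub by (simp add: emul_assoc subset_iff)
  qed (use sub in \<open>auto simp: one mult emul_one_left emul_one_right\<close>)
  fix x y z
  assume "x \<in> carrier ?R" "y \<in> carrier ?R" "z \<in> carrier ?R"
  then show "(x \<oplus>\<^bsub>?R\<^esub> y) \<otimes>\<^bsub>?R\<^esub> z = x \<otimes>\<^bsub>?R\<^esub> z \<oplus>\<^bsub>?R\<^esub> y \<otimes>\<^bsub>?R\<^esub> z"
    and "z \<otimes>\<^bsub>?R\<^esub> (x \<oplus>\<^bsub>?R\<^esub> y) = z \<otimes>\<^bsub>?R\<^esub> x \<oplus>\<^bsub>?R\<^esub> z \<otimes>\<^bsub>?R\<^esub> y"
    using sub by (simp_all add: emul_distrib_left emul_distrib_right subset_iff)
qed

lemma ring_Eplus: "ring (Eplus_ring :: 'a::field_char_0 psido ring)"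
  unfolding Eplus_ring_def Eplus_eq
proof (rule ring_of_closed_set)
  show "Epoly \<subseteq> PsiDO" by (auto simp: Epoly_def)
  show "eone \<in> Epoly" by (simp add: Epoly_def psido_one) (simp add: eone_def)
  show "ezero \<in> Epoly" unfolding Epoly_vanish_on by (rule vanish_on_zero)
  show "eadd A B \<in> Epoly" if "A \<in> Epoly" "B \<in> Epoly" for A B
    using that unfolding Epoly_vanish_on by (rule vanish_on_add)
  show "eneg A \<in> Epoly" if "A \<in> Epoly" for A
    using that unfolding Epoly_vanish_on by (rule vanish_on_neg)
  show "emul A B \<in> Epoly" if "A \<in> Epoly" "B \<in> Epoly" for A B
    using that by (rule epoly_mult)
qed

theorem lemma1:
  shows "ring (Eplus_ring :: 'a::field_char_0 psido ring)
    \<and> (Eplus :: 'a psido set) = Epoly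
    \<and> subgroup (Eplus :: 'a psido set) E_addgroup
    \<and> subgroup (Eminus :: 'a psido set) E_addgroup
    \<and> (\<forall>A \<in> (PsiDO :: 'a psido set). \<exists>!PM. fst PM \<in> Eplus \<and> snd PM \<in> Eminus
          \<and> A = eadd (fst PM) (snd PM))"
proof -
  have "subgroup (Eplus :: 'a psido set) E_addgroup" "subgroup (Eminus :: 'a psido set) E_addgroup"
    unfolding Eplus_eq Epoly_vanish_on Eminus_vanish_on by (rule subgroup_vanish_on)+
  moreover have "\<forall>A \<in> (PsiDO :: 'a psido set). \<exists>!PM. fst PM \<in> Eplus \<and> snd PM \<in> Eminus
      \<and> A = eadd (fst PM) (snd PM)"
    unfolding Eplus_eq Epoly_vanish_on Eminus_vanish_on using vanish_on_decomposition by blast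
  ultimately show ?thesis using ring_Eplus Eplus_eq by blast
qed

end
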